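(* The stabilizer of $z^*$ in $G$ is the cyclic subgroup generated by $\exp(\mathrm{ad}\,z^* )$.
   Context: $\mathbb F$ is a field of characteristic zero, $\mathfrak{sl}_2$ the Lie algebra of $2\times2$ trace-zero matrices over $\mathbb F$. Let $x^*=\begin{pmatrix}1&-1\\1&-1\end{pmatrix}$, $y^*=\begin{pmatrix}0&0\\1&0\end{pmatrix}$, $z^*=\begin{pmatrix}0&-1\\0&0\end{pmatrix}$; $G$ is the subgroup of $\mathrm{Aut}_{\mathbb F}(\mathfrak{sl}_2)$ generated by $\exp(\mathrm{ad}\,x^* ),\exp(\mathrm{ad}\,y^* ),\exp(\mathrm{ad}\,z^* )$. *)

theory Defs
  imports "HOL-Analysis.Analysis" "HOL-Algebra.Bij" "HOL-Algebra.Generated_Groups"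
begin

type_synonym 'a mat2 = "'a ^ 2 ^ 2"

definition mk2 :: "'a \<Rightarrow> 'a \<Rightarrow> 'a \<Rightarrow> 'a \<Rightarrow> 'a mat2" where
  "mk2 a b c d = (\<chi> i j. if i = 1 then (if j = 1 then a else b) else (if j = 1 then c else d))"

definition trace2 :: "('a::comm_ring_1) mat2 \<Rightarrow> 'a" where
  "trace2 m = m $ 1 $ 1 + m $ 2 $ 2"

definition sl2 :: "('a::field) mat2 set" where
  "sl2 = {m. trace2 m = 0}"

definition lie_bracket :: "('a::comm_ring_1) mat2 \<Rightarrow> 'a mat2 \<Rightarrow> 'a mat2" where
  "lie_bracket x y = x ** y - y ** x"

definition ad :: "('a::comm_ring_1) mat2 \<Rightarrow> 'a mat2 \<Rightarrow> 'a mat2" where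
  "ad x = lie_bracket x"

text \<open>For nilpotent x the map ad x is nilpotent on the 4-dimensional space
  of 2x2 matrices, so (ad x)^k = 0 for k >= 4 and the truncated sum is exactly
  the exponential series.\<close>
definition smult2 :: "('a::times) \<Rightarrow> 'a mat2 \<Rightarrow> 'a mat2" where
  "smult2 c m = (\<chi> i j. c * m $ i $ j)"

definition exp_ad :: "('a::field_char_0) mat2 \<Rightarrow> ('a mat2 \<Rightarrow> 'a mat2)" where
  "exp_ad x = (\<lambda>m \<in> sl2. (\<Sum>k<4. smult2 (1 / of_nat (fact k)) ((ad x ^^ k) m)))"

definition xstar :: "('a::field) mat2" where "xstar = mk2 1 (-1) 1 (-1)"
definition ystar :: "('a::field) mat2" where "ystar = mk2 0 0 1 0"
definition zstar :: "('a::field) mat2" where "zstar = mk2 0 (-1) 0 0"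

definition Gsl2 :: "((('a::field_char_0) mat2 \<Rightarrow> 'a mat2) set)" where
  "Gsl2 = generate (BijGroup sl2) {exp_ad xstar, exp_ad ystar, exp_ad zstar}"

end

theory Submission
  imports Defs
begin

text \<open>
  Every element of G is a conjugation m \<mapsto> P m P^{-1} by an integer
  matrix P of determinant 1: for a square-zero matrix x one has
  exp(ad x) = Ad(1 + x), and the three generators are of this form with
  1 + x in SL_2(Z).  Conjugation by P = (a b; c d) sends z* to
  (ac, -a^2; c^2, -ac), so it fixes z* exactly when c = 0 and a = \<plusminus>1, i.e. when
  P = \<plusminus>(1 k; 0 1) for an integer k.  These conjugations are precisely the
  integer powers of exp(ad z*) = Ad(1 -1; 0 1), which gives the theorem.
\<close>


lemma mk2_nth [simp]:
  "mk2 a b c d $ 1 $ 1 = a" "mk2 a b c d $ 1 $ 2 = b"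
  "mk2 a b c d $ 2 $ 1 = c" "mk2 a b c d $ 2 $ 2 = d"
  by (simp_all add: mk2_def)

lemma mat2_eq_iff:
  "(m :: 'a mat2) = n \<longleftrightarrow> m$1$1 = n$1$1 \<and> m$1$2 = n$1$2 \<and> m$2$1 = n$2$1 \<and> m$2$2 = n$2$2"
  by (simp add: vec_eq_iff forall_2)

lemma mk2_eq_iff [simp]: "mk2 a b c d = mk2 a' b' c' d' \<longleftrightarrow> a = a' \<and> b = b' \<and> c = c' \<and> d = d'"
  by (simp add: mat2_eq_iff)

lemma mat2_cases:
  obtains a b c d where "(m :: 'a mat2) = mk2 a b c d"
  by (metis mat2_eq_iff mk2_nth)

lemma mk2_mult [simp]:
  "mk2 a b c d ** mk2 e f g h = mk2 (a*e + b*g) (a*f + b*h) (c*e + d*g) (c*f + d*h)"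
  by (simp add: mat2_eq_iff matrix_matrix_mult_def sum_2)

lemma mk2_add [simp]: "mk2 a b c d + mk2 e f g h = mk2 (a+e) (b+f) (c+g) (d+h)"
  by (simp add: mat2_eq_iff)

lemma mk2_diff [simp]: "mk2 a b c d - mk2 e f g h = mk2 (a-e) (b-f) (c-g) (d-h)"
  by (simp add: mat2_eq_iff)

lemma mk2_uminus [simp]: "- mk2 a b c d = mk2 (-a) (-b) (-c) (-d)"
  by (simp add: mat2_eq_iff)

lemma mk2_zero: "(0 :: 'a::zero mat2) = mk2 0 0 0 0"
  by (simp add: mat2_eq_iff)

lemma mat_mk2: "(mat k :: 'a::zero mat2) = mk2 k 0 0 k"
  by (simp add: mat2_eq_iff mat_def)

lemma det_mk2 [simp]: "det (mk2 a b c (d :: 'a::comm_ring_1)) = a*d - b*c"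
  by (simp add: det_2)

lemma trace2_mk2 [simp]: "trace2 (mk2 a b c d) = a + d"
  by (simp add: trace2_def)

lemma sl2_mk2_iff: "mk2 a b c d \<in> sl2 \<longleftrightarrow> d = -a"
  by (auto simp: sl2_def add_eq_0_iff)

lemma matrix_diff_ldistrib:
  "(A :: 'a::ring_1 ^'n^'m) ** (B - C) = A ** B - A ** C"
  by (simp add: matrix_matrix_mult_def vec_eq_iff sum_subtractf algebra_simps)

lemma matrix_diff_rdistrib:
  "((A :: 'a::ring_1 ^'n^'m) - B) ** C = A ** C - B ** C"
  by (simp add: matrix_matrix_mult_def vec_eq_iff sum_subtractf algebra_simps)

lemma matrix_add_rdistrib: "((A :: 'a::ring_1 ^'n^'m) + B) ** C = A ** C + B ** C"
  by (simp add: matrix_matrix_mult_def vec_eq_iff sum.distrib algebra_simps)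

lemma matrix_neg_ldistrib: "(A :: 'a::ring_1 ^'n^'m) ** (- B) = - (A ** B)"
  by (simp add: matrix_matrix_mult_def vec_eq_iff sum_negf)

lemma matrix_neg_rdistrib: "(- (A :: 'a::ring_1 ^'n^'m)) ** B = - (A ** B)"
  by (simp add: matrix_matrix_mult_def vec_eq_iff sum_negf)

definition of_int_mat :: "int mat2 \<Rightarrow> 'a::ring_1 mat2" where
  "of_int_mat P = (\<chi> i j. of_int (P $ i $ j))"

definition adj2 :: "'a::comm_ring_1 mat2 \<Rightarrow> 'a mat2" where
  "adj2 m = mk2 (m$2$2) (- m$1$2) (- m$2$1) (m$1$1)"

lemma of_int_mat_mk2 [simp]:
  "of_int_mat (mk2 a b c d) = mk2 (of_int a) (of_int b) (of_int c) (of_int d)"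
  by (simp add: mat2_eq_iff of_int_mat_def)

lemma adj2_mk2 [simp]: "adj2 (mk2 a b c d) = mk2 d (-b) (-c) a"
  by (simp add: adj2_def)

lemma of_int_mat_0 [simp]: "of_int_mat 0 = 0"
  by (simp add: of_int_mat_def vec_eq_iff)

lemma of_int_mat_mult: "(of_int_mat (P ** Q) :: 'a::comm_ring_1 mat2) = of_int_mat P ** of_int_mat Q"
  by (cases P rule: mat2_cases; cases Q rule: mat2_cases) simp

lemma of_int_mat_adj2: "(of_int_mat (adj2 P) :: 'a::comm_ring_1 mat2) = adj2 (of_int_mat P)"
  by (cases P rule: mat2_cases) simp

lemma adj2_mult: "adj2 ((A :: 'a::comm_ring_1 mat2) ** B) = adj2 B ** adj2 A"
  by (cases A rule: mat2_cases; cases B rule: mat2_cases) (simp add: algebra_simps)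

lemma adj2_mult_self: "adj2 (A :: 'a::comm_ring_1 mat2) ** A = mat (det A)"
  by (cases A rule: mat2_cases) (simp add: mat_mk2 algebra_simps)

lemma mult_adj2_self: "(A :: 'a::comm_ring_1 mat2) ** adj2 A = mat (det A)"
  by (cases A rule: mat2_cases) (simp add: mat_mk2 algebra_simps)

lemma trace2_conj_adj2: "trace2 ((A :: 'a::comm_ring_1 mat2) ** m ** adj2 A) = det A * trace2 m"
  by (cases A rule: mat2_cases; cases m rule: mat2_cases) (simp add: algebra_simps)

lemma of_int_mat_mat1 [simp]: "(of_int_mat (mat 1) :: 'a::comm_ring_1 mat2) = mat 1"
  by (simp add: mat_mk2)

lemma adj2_mat1 [simp]: "adj2 (mat 1 :: 'a::comm_ring_1 mat2) = mat 1"
  by (simp add: mat_mk2)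

lemma det_adj2 [simp]: "det (adj2 (A :: 'a::comm_ring_1 mat2)) = det A"
  by (cases A rule: mat2_cases) (simp add: algebra_simps)

definition conj_act :: "int mat2 \<Rightarrow> 'a::field mat2 \<Rightarrow> 'a mat2" where
  "conj_act P = (\<lambda>m \<in> sl2. of_int_mat P ** m ** of_int_mat (adj2 P))"

lemma conj_act_in_sl2:
  assumes "m \<in> sl2" shows "(conj_act P m :: 'a::field mat2) \<in> sl2"
  using assms by (simp add: conj_act_def sl2_def of_int_mat_adj2 trace2_conj_adj2)

text \<open>Outside sl_2 the action is the default value, as for the elements of BijGroup.\<close>
lemma conj_act_outside: "m \<notin> sl2 \<Longrightarrow> (conj_act P m :: 'a::field mat2) = undefined"
  by (simp add: conj_act_def)

lemma conj_act_conj_act: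
  assumes "m \<in> sl2"
  shows "conj_act P (conj_act Q m) = (conj_act (P ** Q) m :: 'a::field mat2)"
  using assms conj_act_in_sl2[OF assms, of Q]
  by (simp add: conj_act_def of_int_mat_mult adj2_mult matrix_mul_assoc)

lemma conj_act_mat1: "conj_act (mat 1) = (\<lambda>m \<in> sl2. m :: 'a::field mat2)"
  by (simp add: conj_act_def)

lemma conj_act_uminus: "conj_act (- P) = (conj_act P :: 'a::field mat2 \<Rightarrow> _)"
  unfolding conj_act_def
proof (rule restrict_ext)
  fix m :: "'a mat2"
  show "of_int_mat (- P) ** m ** of_int_mat (adj2 (- P)) = of_int_mat P ** m ** of_int_mat (adj2 P)"
    by (cases P rule: mat2_cases; cases m rule: mat2_cases) (simp add: algebra_simps)
qed

lemma conj_act_inverse: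
  assumes "det P = 1" "m \<in> sl2"
  shows "conj_act (adj2 P) (conj_act P m) = (m :: 'a::field mat2)"
    and "conj_act P (conj_act (adj2 P) m) = m"
  using assms by (simp_all add: conj_act_conj_act adj2_mult_self mult_adj2_self conj_act_mat1)

lemma conj_act_Bij:
  assumes "det P = 1"
  shows "(conj_act P :: 'a::field mat2 \<Rightarrow> _) \<in> carrier (BijGroup sl2)"
proof -
  have "bij_betw (conj_act P) sl2 (sl2 :: 'a mat2 set)"
    using assms
    by (intro bij_betw_byWitness[where f'="conj_act (adj2 P)"])
       (auto simp: conj_act_in_sl2 conj_act_inverse)
  then show ?thesis
    by (simp add: BijGroup_def Bij_def conj_act_def)
qed

lemma conj_act_mult:
  assumes "det P = 1" "det Q = 1"
  shows "conj_act P \<otimes>\<^bsub>BijGroup sl2\<^esub> conj_act Q = (conj_act (P ** Q) :: 'a::field mat2 \<Rightarrow> _)"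
proof -
  have "compose sl2 (conj_act P) (conj_act Q) = (conj_act (P ** Q) :: 'a mat2 \<Rightarrow> _)"
    by (auto simp: compose_def conj_act_conj_act conj_act_outside)
  then show ?thesis
    using conj_act_Bij[OF assms(1), where 'a='a] conj_act_Bij[OF assms(2), where 'a='a]
    by (simp add: BijGroup_def)
qed

lemma conj_act_one: "\<one>\<^bsub>BijGroup sl2\<^esub> = (conj_act (mat 1) :: 'a::field mat2 \<Rightarrow> _)"
  by (simp add: BijGroup_def conj_act_mat1)

lemma conj_act_inv:
  assumes "det P = 1"
  shows "inv\<^bsub>BijGroup sl2\<^esub> conj_act P = (conj_act (adj2 P) :: 'a::field mat2 \<Rightarrow> _)"
  using assms
  by (intro group.inv_equality[OF group_BijGroup])
     (simp_all add: conj_act_mult conj_act_Bij adj2_mult_self conj_act_one)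

lemma ad_diff: "ad x (A - B) = ad x A - ad (x :: 'a::comm_ring_1 mat2) B"
  by (simp add: ad_def lie_bracket_def matrix_diff_ldistrib matrix_diff_rdistrib)

lemma ad_uminus: "ad x (- A) = - ad (x :: 'a::comm_ring_1 mat2) A"
  by (simp add: ad_def lie_bracket_def matrix_neg_ldistrib matrix_neg_rdistrib)

text \<open>For a square-zero matrix x the series exp(ad x) stops after the quadratic term,
  and since (ad x)^2 m = -2 x m x, it equals conjugation by exp x = 1 + x.\<close>
lemma exp_ad_square_zero:
  fixes x m :: "'a::field_char_0 mat2"
  assumes sq: "x ** x = 0" and m: "m \<in> sl2"
  shows "exp_ad x m = (mat 1 + x) ** m ** (mat 1 - x)"
proof -
  have xx: "A ** x ** x = 0" "x ** x ** A = 0" for A :: "'a mat2"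
    by (simp_all add: matrix_mul_assoc[symmetric] sq)
  have ad2: "ad x (ad x m) = - (x ** m ** x) - x ** m ** x"
    by (simp add: ad_def lie_bracket_def matrix_diff_ldistrib matrix_diff_rdistrib
        matrix_mul_assoc xx)
  have "ad x (x ** m ** x) = 0"
    by (simp add: ad_def lie_bracket_def matrix_mul_assoc xx)
  then have ad3: "ad x (- (x ** m ** x) - x ** m ** x) = 0"
    by (simp only: ad_diff ad_uminus) simp
  have "exp_ad x m = smult2 1 m + smult2 1 (ad x m) + smult2 (1/2) (ad x (ad x m))
                     + smult2 (1/6) (ad x (ad x (ad x m)))"
    using m by (simp add: exp_ad_def eval_nat_numeral)
  also have "\<dots> = smult2 1 m + smult2 1 (x ** m - m ** x)
                   + smult2 (1/2) (- (x ** m ** x) - x ** m ** x) + smult2 (1/6) 0"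
    by (simp only: ad2 ad3) (simp add: ad_def lie_bracket_def)
  also have "\<dots> = m + (x ** m - m ** x) - x ** m ** x"
    by (simp add: smult2_def vec_eq_iff)
  also have "\<dots> = (mat 1 + x) ** m ** (mat 1 - x)"
    by (simp add: matrix_add_rdistrib matrix_add_ldistrib matrix_diff_ldistrib algebra_simps)
  finally show ?thesis .
qed

text \<open>For an integer square-zero trace-zero matrix N the adjugate of 1 + N is 1 - N,
  so exp(ad N) is the conjugation action of the SL_2(Z) element 1 + N.\<close>
lemma exp_ad_of_int:
  assumes "N ** N = 0" "trace2 N = 0"
  shows "exp_ad (of_int_mat N) = (conj_act (mat 1 + N) :: 'a::field_char_0 mat2 \<Rightarrow> _)"
proof -
  have sq: "of_int_mat N ** of_int_mat N = (0 :: 'a mat2)"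
    using assms(1) by (simp flip: of_int_mat_mult)
  have adj: "of_int_mat (adj2 (mat 1 + N)) = (mat 1 - of_int_mat N :: 'a mat2)"
    using assms(2) by (cases N rule: mat2_cases) (simp add: mat_mk2 add_eq_0_iff)
  have lift: "of_int_mat (mat 1 + N) = (mat 1 + of_int_mat N :: 'a mat2)"
    by (cases N rule: mat2_cases) (simp add: mat_mk2)
  show ?thesis
  proof
    fix m :: "'a mat2"
    show "exp_ad (of_int_mat N) m = conj_act (mat 1 + N) m"
      by (cases "m \<in> sl2")
         (simp_all add: exp_ad_square_zero[OF sq] conj_act_def lift adj, simp add: exp_ad_def)
  qed
qed

lemma exp_ad_generators:
  "exp_ad xstar = (conj_act (mk2 2 (-1) 1 0) :: 'a::field_char_0 mat2 \<Rightarrow> _)"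
  "exp_ad ystar = (conj_act (mk2 1 0 1 1) :: 'a::field_char_0 mat2 \<Rightarrow> _)"
  "exp_ad zstar = (conj_act (mk2 1 (-1) 0 1) :: 'a::field_char_0 mat2 \<Rightarrow> _)"
    using exp_ad_of_int[of "mk2 1 (-1) 1 (-1)"] exp_ad_of_int[of "mk2 0 0 1 0"]
      exp_ad_of_int[of "mk2 0 (-1) 0 0"]
    by (simp_all add: xstar_def ystar_def zstar_def mat_mk2 mk2_zero)

definition conj_SL2Z :: "('a::field mat2 \<Rightarrow> 'a mat2) set" where
  "conj_SL2Z = conj_act ` {P. det P = 1}"

lemma subgroup_conj_SL2Z: "subgroup conj_SL2Z (BijGroup (sl2 :: 'a::field mat2 set))"
proof
  show "conj_SL2Z \<subseteq> carrier (BijGroup (sl2 :: 'a mat2 set))"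
    by (auto simp: conj_SL2Z_def conj_act_Bij)
  show "g \<otimes>\<^bsub>BijGroup sl2\<^esub> h \<in> conj_SL2Z" if "g \<in> conj_SL2Z" "h \<in> conj_SL2Z"
    for g h :: "'a mat2 \<Rightarrow> 'a mat2"
    using that by (auto simp: conj_SL2Z_def conj_act_mult det_mul)
  show "\<one>\<^bsub>BijGroup sl2\<^esub> \<in> (conj_SL2Z :: ('a mat2 \<Rightarrow> 'a mat2) set)"
    by (auto simp: conj_SL2Z_def conj_act_one)
  show "inv\<^bsub>BijGroup sl2\<^esub> g \<in> conj_SL2Z" if "g \<in> conj_SL2Z" for g :: "'a mat2 \<Rightarrow> 'a mat2"
    using that by (auto simp: conj_SL2Z_def conj_act_inv)
qed

lemma Gsl2_subset_conj_SL2Z: "Gsl2 \<subseteq> (conj_SL2Z :: ('a::field_char_0 mat2 \<Rightarrow> _) set)"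
  unfolding Gsl2_def
proof (rule group.generate_subgroup_incl[OF group_BijGroup _ subgroup_conj_SL2Z])
  have "det (mk2 2 (-1) 1 (0::int)) = 1" "det (mk2 1 0 1 (1::int)) = 1"
    "det (mk2 1 (-1) 0 (1::int)) = 1"
    by simp_all
  then show "{exp_ad xstar, exp_ad ystar, exp_ad zstar} \<subseteq> (conj_SL2Z :: ('a mat2 \<Rightarrow> _) set)"
    unfolding exp_ad_generators conj_SL2Z_def by blast
qed

definition unip :: "int \<Rightarrow> int mat2" where
  "unip k = mk2 1 k 0 1"

lemma unip_mult: "unip a ** unip b = unip (a + b)"
  by (simp add: unip_def)

lemma det_unip [simp]: "det (unip k) = 1"
  by (simp add: unip_def)

lemma adj2_unip: "adj2 (unip k) = unip (- k)"
  by (simp add: unip_def)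

lemma conj_act_unip_pow:
  "conj_act (unip a) [^]\<^bsub>BijGroup sl2\<^esub> (k :: int) = (conj_act (unip (k * a)) :: 'a::field mat2 \<Rightarrow> _)"
proof -
  have nat_pow: "conj_act (unip a) [^]\<^bsub>BijGroup sl2\<^esub> n = (conj_act (unip (int n * a)) :: 'a mat2 \<Rightarrow> _)"
    for n :: nat
  proof (induction n)
    case 0
    show ?case by (simp add: conj_act_one unip_def mat_mk2)
  next
    case (Suc n)
    then show ?case
      by (simp add: conj_act_mult unip_mult algebra_simps)
  qed
  show ?thesis
    by (simp add: int_pow_def2 nat_pow conj_act_inv adj2_unip)
qed

lemma generate_exp_ad_zstar:
  "generate (BijGroup sl2) {exp_ad zstar} = range (\<lambda>k. conj_act (unip k) :: 'a::field_char_0 mat2 \<Rightarrow> _)"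
proof -
  have z: "exp_ad zstar = (conj_act (unip (-1)) :: 'a mat2 \<Rightarrow> _)"
    by (simp add: exp_ad_generators unip_def)
  have "generate (BijGroup sl2) {exp_ad zstar} = {conj_act (unip (- k)) :: 'a mat2 \<Rightarrow> _ | k. k \<in> UNIV}"
    unfolding z by (simp add: group.generate_pow[OF group_BijGroup] conj_act_Bij conj_act_unip_pow)
  also have "\<dots> = range (\<lambda>k. conj_act (unip k))"
    by (auto intro: exI[of _ "- k" for k])
  finally show ?thesis .
qed

text \<open>Conjugation by (a b; c d) sends z* to (ac, -a^2; c^2, -ac); it fixes z* iff c = 0
  and a^2 = 1.  Injectivity of of_int (characteristic zero) is used here.\<close>
lemma conj_act_fixes_zstar_iff:
  "conj_act (mk2 a b c d) zstar = (zstar :: 'a::field_char_0 mat2) \<longleftrightarrow> c = 0 \<and> a * a = 1"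
proof -
  have "conj_act (mk2 a b c d) zstar =
          (mk2 (of_int (a*c)) (- of_int (a*a)) (of_int (c*c)) (- of_int (a*c)) :: 'a mat2)"
    by (simp add: conj_act_def zstar_def sl2_mk2_iff algebra_simps)
  then show ?thesis
    by (auto simp: zstar_def simp flip: of_int_mult)
qed

text \<open>The stabilizer of z* in SL_2(Z) is {\<plusminus> unip k}, so its image under the action
  consists of unipotent conjugations.\<close>
lemma SL2Z_stabilizer_zstar:
  assumes "det P = 1" and "conj_act P zstar = (zstar :: 'a::field_char_0 mat2)"
  shows "conj_act P \<in> range (\<lambda>k. conj_act (unip k) :: 'a mat2 \<Rightarrow> _)"
proof -
  obtain a b c d where P: "P = mk2 a b c d" by (rule mat2_cases)
  with assms have "c = 0" "a * a = 1" "a * d = 1"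
    by (simp_all add: conj_act_fixes_zstar_iff)
  then have "P = unip b \<or> P = - unip (- b)"
    by (auto simp: P unip_def zmult_eq_1_iff)
  then show ?thesis
    using conj_act_uminus by (metis rangeI)
qed

theorem theorem6p6:
  shows "{g \<in> (Gsl2 :: (('a::field_char_0) mat2 \<Rightarrow> 'a mat2) set). g zstar = zstar}
         = generate (BijGroup sl2) {exp_ad zstar}"
proof
  show "{g \<in> Gsl2. g zstar = zstar} \<subseteq> generate (BijGroup sl2) {exp_ad (zstar :: 'a mat2)}"
    using Gsl2_subset_conj_SL2Z
    by (auto simp: generate_exp_ad_zstar conj_SL2Z_def intro: SL2Z_stabilizer_zstar)
  have "generate (BijGroup sl2) {exp_ad zstar} \<subseteq> (Gsl2 :: ('a mat2 \<Rightarrow> _) set)"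
    unfolding Gsl2_def by (rule group.mono_generate[OF group_BijGroup]) blast
  moreover have "conj_act (unip k) zstar = (zstar :: 'a mat2)" for k
    by (simp add: unip_def conj_act_fixes_zstar_iff)
  ultimately show "generate (BijGroup sl2) {exp_ad zstar} \<subseteq> {g \<in> (Gsl2 :: ('a mat2 \<Rightarrow> _) set). g zstar = zstar}"
    by (auto simp: generate_exp_ad_zstar)
qed

end
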